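(* Let $\Gamma=(\Gamma_i)_{i\in\mathit{Agt}}$ be an agent vocabulary profile with each $\Gamma_i$ finite, let $\varphi_0\in\mathcal{L}^{\mathsf{dyn}}$ and let $S_0=((B_i)_i,V)$ be a state in $\mathbf{S}_\Gamma$. Then $(S_0,\mathbf{S}_\Gamma)\models\varphi_0$ iff the quantified Boolean formula $\exists X_s(\mathrm{desc}_{S_0}(X_s)\wedge tr_s(\varphi_0))$ is true.
   Context: Setting. $\mathit{Agt}=\{1,\dots,n\}$; $\mathit{Atm}$ countably infinite, containing special atoms $\mathsf{rew}_i,\mathsf{pun}_i$. $\mathcal{L}_0$: $\alpha::=p\mid\neg\alpha\mid\alpha\wedge\alpha\mid\triangle_i\alpha$. State $S=((B_i)_i,V)$, $B_i\subseteq\mathcal{L}_0$, $V\subseteq\mathit{Atm}$; $S\models p$ iff $p\in V$, Boolean as usual, $S\models\triangle_i\alpha$ iff $\alpha\in B_i$. $S\mathcal{E}_iS'$ iff $S'\models\alpha$ for all $\alpha\in B_i$; $S\mathcal{A}_iS'$ iff $S'\models\alpha$ for some $\alpha$ with $(\alpha\to\mathsf{rew}_i)\in B_i$; $S\mathcal{R}_iS'$ iff $S'\models\alpha$ for some $\alpha$ with $(\alpha\to\mathsf{pun}_i)\in B_i$. $\mathbf{S}_\Gamma$ is the set of states with $B_i\subseteq\Gamma_i$ for all $i$. Programs $\pi::=+_i\alpha\mid-_i\alpha\mid\pi;\pi\mid\pi\cup\pi\mid?\varphi$; $\mathcal{L}^{\mathsf{dyn}}$: $\varphi::=\alpha\mid\neg\varphi\mid\varphi\wedge\varphi\mid\Box_i\varphi\mid\mathcal{A}_i\varphi\mid\mathcal{R}_i\varphi\mid\mathcal{A}^{\mathsf{real}}_i\varphi\mid\mathcal{R}^{\mathsf{real}}_i\varphi\mid[\pi]\varphi$.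 For $S\in U$: $(S,U)\models\alpha$ iff $S\models\alpha$; $(S,U)\models\Box_i\varphi$ iff all $S'\in U$ with $S\mathcal{E}_iS'$ satisfy $\varphi$; $(S,U)\models\mathcal{A}_i\varphi$ (resp. $\mathcal{R}_i\varphi$) iff every $S'\in U$ satisfying $\varphi$ has $S\mathcal{A}_iS'$ (resp. $S\mathcal{R}_iS'$); $(S,U)\models\mathcal{A}^{\mathsf{real}}_i\varphi$ (resp. $\mathcal{R}^{\mathsf{real}}_i\varphi$) iff every $S'\in U$ satisfying $\varphi$ with $S\mathcal{E}_iS'$ has $S\mathcal{A}_iS'$ (resp. $S\mathcal{R}_iS'$); $(S,U)\models[\pi]\varphi$ iff every $S'\in U$ with $S\to^U_\pi S'$ satisfies $\varphi$, where $S\to^U_{+_i\alpha}S'$ iff $V'=V$, $B'_i=B_i\cup\{\alpha\}$, $B'_j=B_j$ ($j\ne i$); $S\to^U_{-_i\alpha}S'$ likewise with $B'_i=B_i\setminus\{\alpha\}$; $;$ is composition through some $S''\in U$; $\cup$ is union; $S\to^U_{?\varphi}S'$ iff $S'=S$ and $(S,U)\models\varphi$. Translation. For abstract symbols $s$ and $\beta\in\mathcal{L}_0$ there are QBF variables $x_{\beta,s}$. $X_s$ is the set of variables $x_{\triangle_i\alpha,s}$, $x_{\triangle_i(\alpha\to\mathsf{rew}_i),s}$, $x_{\triangle_i(\alpha\to\mathsf{pun}_i),s}$ for $i\in\mathit{Agt}$, $\alpha\in\Gamma_i$, and $x_{p,s}$ for atoms $p$ occurring in $\Gamma$ or $\varphi_0$;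 $\forall X_s$/$\exists X_s$ quantify all of them. Macros: $\mathrm{eq}_{\mathrm{prop}}(s,s'):=\bigwedge_p(x_{p,s}\leftrightarrow x_{p,s'})$; $\mathrm{eq}_j(s,s'):=\bigwedge_{\alpha\in\Gamma_j}(x_{\triangle_j\alpha,s}\leftrightarrow x_{\triangle_j\alpha,s'})$; $\mathrm{eq}^{+\alpha}_i(s,s'):=x_{\triangle_i\alpha,s'}\wedge\bigwedge_{\beta\in\Gamma_i,\beta\ne\alpha}(x_{\triangle_i\beta,s}\leftrightarrow x_{\triangle_i\beta,s'})$; $\mathrm{eq}^{-\alpha}_i(s,s'):=\neg x_{\triangle_i\alpha,s'}\wedge\bigwedge_{\beta\in\Gamma_i,\beta\ne\alpha}(x_{\triangle_i\beta,s}\leftrightarrow x_{\triangle_i\beta,s'})$. $tr_s$: $tr_s(p)=x_{p,s}$; $tr_s(\neg\varphi)=\neg tr_s(\varphi)$; $tr_s(\varphi\wedge\psi)=tr_s(\varphi)\wedge tr_s(\psi)$; $tr_s(\triangle_i\alpha)=x_{\triangle_i\alpha,s}$ if $\alpha\in\Gamma_i$, else $\bot$; $tr_s(\Box_i\varphi)=\forall X_{s''}(E_{i,s,s''}\to tr_{s''}(\varphi))$; $tr_s(\mathcal{A}_i\varphi)=\forall X_{s''}(tr_{s''}(\varphi)\to A_{i,s,s''})$; $tr_s(\mathcal{R}_i\varphi)=\forall X_{s''}(tr_{s''}(\varphi)\to R_{i,s,s''})$; $tr_s(\mathcal{A}^{\mathsf{real}}_i\varphi)=\forall X_{s''}(tr_{s''}(\varphi)\wedge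 E_{i,s,s''}\to A_{i,s,s''})$; $tr_s(\mathcal{R}^{\mathsf{real}}_i\varphi)=\forall X_{s''}(tr_{s''}(\varphi)\wedge E_{i,s,s''}\to R_{i,s,s''})$; $tr_s([\pi]\varphi)=\forall X_{s''}(tr^{\mathrm{prog}}_{s,s''}(\pi)\to tr_{s''}(\varphi))$; where $E_{i,s,s''}:=\bigwedge_{\alpha\in\Gamma_i}(x_{\triangle_i\alpha,s}\to tr_{s''}(\alpha))$, $A_{i,s,s''}:=\bigvee_{(\alpha\to\mathsf{rew}_i)\in\Gamma_i}(x_{\triangle_i(\alpha\to\mathsf{rew}_i),s}\wedge tr_{s''}(\alpha))$, $R_{i,s,s''}:=\bigvee_{(\alpha\to\mathsf{pun}_i)\in\Gamma_i}(x_{\triangle_i(\alpha\to\mathsf{pun}_i),s}\wedge tr_{s''}(\alpha))$. $tr^{\mathrm{prog}}$: $tr^{\mathrm{prog}}_{s,s'}(+_i\alpha)=\bigwedge_{j\ne i}\mathrm{eq}_j(s,s')\wedge\mathrm{eq}^{+\alpha}_i(s,s')\wedge\mathrm{eq}_{\mathrm{prop}}(s,s')$; $tr^{\mathrm{prog}}_{s,s'}(-_i\alpha)=\bigwedge_{j\ne i}\mathrm{eq}_j(s,s')\wedge\mathrm{eq}^{-\alpha}_i(s,s')\wedge\mathrm{eq}_{\mathrm{prop}}(s,s')$; $tr^{\mathrm{prog}}_{s,s'}(\pi_1;\pi_2)=\exists X_{s''}(tr^{\mathrm{prog}}_{s,s''}(\pi_1)\wedge tr^{\mathrm{prog}}_{s'',s'}(\pi_2))$;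 $tr^{\mathrm{prog}}_{s,s'}(\pi_1\cup\pi_2)=tr^{\mathrm{prog}}_{s,s'}(\pi_1)\vee tr^{\mathrm{prog}}_{s,s'}(\pi_2)$; $tr^{\mathrm{prog}}_{s,s'}(?\varphi)=\bigwedge_j\mathrm{eq}_j(s,s')\wedge\mathrm{eq}_{\mathrm{prop}}(s,s')\wedge tr_s(\varphi)$. In each quantified clause $s''$ is a fresh symbol. Finally $\mathrm{desc}_{S_0}(X_s):=\bigwedge_i(\bigwedge_{\alpha\in B_i}x_{\triangle_i\alpha,s}\wedge\bigwedge_{\alpha\in\Gamma_i\setminus B_i}\neg x_{\triangle_i\alpha,s})\wedge\bigwedge_{p\in V}x_{p,s}\wedge\bigwedge_{p\notin V}\neg x_{p,s}$ (over atoms $p$ with $x_{p,s}\in X_s$). *)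

theory Defs
  imports Main
begin

text \<open>Agents: a finite enumerable type 'agt (Agt = UNIV).  Atoms: countably
  infinitely many ordinary atoms plus the special atoms rew_i and pun_i.\<close>

datatype 'agt atm = Atom nat | Rew 'agt | Pun 'agt

datatype 'agt fm0 = Var "'agt atm" | Neg "'agt fm0" | Conj "'agt fm0" "'agt fm0"
  | Tri 'agt "'agt fm0"

definition imp0 :: "'agt fm0 \<Rightarrow> 'agt fm0 \<Rightarrow> 'agt fm0" where
  "imp0 a b = Neg (Conj a (Neg b))"

text \<open>A state: belief bases B_i (one per agent) and a valuation V.\<close>
type_synonym 'agt state = "('agt \<Rightarrow> 'agt fm0 set) \<times> 'agt atm set"

primrec sat0 :: "'agt state \<Rightarrow> 'agt fm0 \<Rightarrow> bool" where
  "sat0 S (Var p) = (p \<in> snd S)"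
| "sat0 S (Neg a) = (\<not> sat0 S a)"
| "sat0 S (Conj a b) = (sat0 S a \<and> sat0 S b)"
| "sat0 S (Tri i a) = (a \<in> fst S i)"

definition relE :: "'agt \<Rightarrow> 'agt state \<Rightarrow> 'agt state \<Rightarrow> bool" where
  "relE i S S' = (\<forall>a \<in> fst S i. sat0 S' a)"

definition relA :: "'agt \<Rightarrow> 'agt state \<Rightarrow> 'agt state \<Rightarrow> bool" where
  "relA i S S' = (\<exists>a. imp0 a (Var (Rew i)) \<in> fst S i \<and> sat0 S' a)"

definition relR :: "'agt \<Rightarrow> 'agt state \<Rightarrow> 'agt state \<Rightarrow> bool" where
  "relR i S S' = (\<exists>a. imp0 a (Var (Pun i)) \<in> fst S i \<and> sat0 S' a)"

definition states_Gamma :: "('agt \<Rightarrow> 'agt fm0 list) \<Rightarrow> 'agt state set" where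
  "states_Gamma \<Gamma> = {S. \<forall>i. fst S i \<subseteq> set (\<Gamma> i)}"

datatype 'agt dyn = DBase "'agt fm0" | DNeg "'agt dyn" | DAnd "'agt dyn" "'agt dyn"
  | DBox 'agt "'agt dyn" | DA 'agt "'agt dyn" | DR 'agt "'agt dyn"
  | DAreal 'agt "'agt dyn" | DRreal 'agt "'agt dyn" | DProg "'agt prog" "'agt dyn"
and 'agt prog = PAdd 'agt "'agt fm0" | PRem 'agt "'agt fm0" | PSeq "'agt prog" "'agt prog"
  | PChoice "'agt prog" "'agt prog" | PTest "'agt dyn"

primrec sat :: "'agt state set \<Rightarrow> 'agt state \<Rightarrow> 'agt dyn \<Rightarrow> bool"
  and step :: "'agt state set \<Rightarrow> 'agt prog \<Rightarrow> 'agt state \<Rightarrow> 'agt state \<Rightarrow> bool" where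
  "sat U S (DBase a) = sat0 S a"
| "sat U S (DNeg \<phi>) = (\<not> sat U S \<phi>)"
| "sat U S (DAnd \<phi> \<psi>) = (sat U S \<phi> \<and> sat U S \<psi>)"
| "sat U S (DBox i \<phi>) = (\<forall>S'\<in>U. relE i S S' \<longrightarrow> sat U S' \<phi>)"
| "sat U S (DA i \<phi>) = (\<forall>S'\<in>U. sat U S' \<phi> \<longrightarrow> relA i S S')"
| "sat U S (DR i \<phi>) = (\<forall>S'\<in>U. sat U S' \<phi> \<longrightarrow> relR i S S')"
| "sat U S (DAreal i \<phi>) = (\<forall>S'\<in>U. sat U S' \<phi> \<and> relE i S S' \<longrightarrow> relA i S S')"
| "sat U S (DRreal i \<phi>) = (\<forall>S'\<in>U. sat U S' \<phi> \<and> relE i S S' \<longrightarrow> relR i S S')"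
| "sat U S (DProg \<pi> \<phi>) = (\<forall>S'\<in>U. step U \<pi> S S' \<longrightarrow> sat U S' \<phi>)"
| "step U (PAdd i a) S S' = (snd S' = snd S \<and> fst S' = (fst S)(i := insert a (fst S i)))"
| "step U (PRem i a) S S' = (snd S' = snd S \<and> fst S' = (fst S)(i := fst S i - {a}))"
| "step U (PSeq p q) S S' = (\<exists>S''\<in>U. step U p S S'' \<and> step U q S'' S')"
| "step U (PChoice p q) S S' = (step U p S S' \<or> step U q S S')"
| "step U (PTest \<phi>) S S' = (S' = S \<and> sat U S \<phi>)"

datatype 'v qbf = QVar 'v | QTop | QBot | QNot "'v qbf" | QAnd "'v qbf" "'v qbf"
  | QOr "'v qbf" "'v qbf" | QImp "'v qbf" "'v qbf" | QIff "'v qbf" "'v qbf"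
  | QAll 'v "'v qbf" | QEx 'v "'v qbf"

primrec qeval :: "('v \<Rightarrow> bool) \<Rightarrow> 'v qbf \<Rightarrow> bool" where
  "qeval v (QVar x) = v x"
| "qeval v QTop = True"
| "qeval v QBot = False"
| "qeval v (QNot f) = (\<not> qeval v f)"
| "qeval v (QAnd f g) = (qeval v f \<and> qeval v g)"
| "qeval v (QOr f g) = (qeval v f \<or> qeval v g)"
| "qeval v (QImp f g) = (qeval v f \<longrightarrow> qeval v g)"
| "qeval v (QIff f g) = (qeval v f \<longleftrightarrow> qeval v g)"
| "qeval v (QAll x f) = (\<forall>b. qeval (v(x := b)) f)"
| "qeval v (QEx x f) = (\<exists>b. qeval (v(x := b)) f)"

definition qbf_true :: "'v qbf \<Rightarrow> bool" where
  "qbf_true f = (\<forall>v. qeval v f)"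

definition qands :: "'v qbf list \<Rightarrow> 'v qbf" where
  "qands fs = foldr QAnd fs QTop"

definition qors :: "'v qbf list \<Rightarrow> 'v qbf" where
  "qors fs = foldr QOr fs QBot"

definition qall_block :: "'v list \<Rightarrow> 'v qbf \<Rightarrow> 'v qbf" where
  "qall_block xs f = foldr QAll xs f"

definition qex_block :: "'v list \<Rightarrow> 'v qbf \<Rightarrow> 'v qbf" where
  "qex_block xs f = foldr QEx xs f"

text \<open>QBF variables x_{beta,s}: pairs (beta, s), abstract symbols s being naturals.\<close>
type_synonym 'agt qvar = "'agt fm0 \<times> nat"

primrec atoms0 :: "'agt fm0 \<Rightarrow> 'agt atm list" where
  "atoms0 (Var p) = [p]"
| "atoms0 (Neg a) = atoms0 a"
| "atoms0 (Conj a b) = atoms0 a @ atoms0 b"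
| "atoms0 (Tri i a) = atoms0 a"

primrec atoms_dyn :: "'agt dyn \<Rightarrow> 'agt atm list"
  and atoms_prog :: "'agt prog \<Rightarrow> 'agt atm list" where
  "atoms_dyn (DBase a) = atoms0 a"
| "atoms_dyn (DNeg \<phi>) = atoms_dyn \<phi>"
| "atoms_dyn (DAnd \<phi> \<psi>) = atoms_dyn \<phi> @ atoms_dyn \<psi>"
| "atoms_dyn (DBox i \<phi>) = atoms_dyn \<phi>"
| "atoms_dyn (DA i \<phi>) = atoms_dyn \<phi>"
| "atoms_dyn (DR i \<phi>) = atoms_dyn \<phi>"
| "atoms_dyn (DAreal i \<phi>) = atoms_dyn \<phi>"
| "atoms_dyn (DRreal i \<phi>) = atoms_dyn \<phi>"
| "atoms_dyn (DProg \<pi> \<phi>) = atoms_prog \<pi> @ atoms_dyn \<phi>"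
| "atoms_prog (PAdd i a) = atoms0 a"
| "atoms_prog (PRem i a) = atoms0 a"
| "atoms_prog (PSeq p q) = atoms_prog p @ atoms_prog q"
| "atoms_prog (PChoice p q) = atoms_prog p @ atoms_prog q"
| "atoms_prog (PTest \<phi>) = atoms_dyn \<phi>"

definition Patoms :: "('agt::enum \<Rightarrow> 'agt fm0 list) \<Rightarrow> 'agt dyn \<Rightarrow> 'agt atm list" where
  "Patoms \<Gamma> \<phi>0 = remdups (concat (map (\<lambda>i. concat (map atoms0 (\<Gamma> i))) enum_class.enum)
                           @ atoms_dyn \<phi>0)"

definition Xs :: "('agt::enum \<Rightarrow> 'agt fm0 list) \<Rightarrow> 'agt atm list \<Rightarrow> nat \<Rightarrow> 'agt qvar list" where
  "Xs \<Gamma> P s =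
     concat (map (\<lambda>i. map (\<lambda>a. (Tri i a, s)) (\<Gamma> i)
                     @ map (\<lambda>a. (Tri i (imp0 a (Var (Rew i))), s)) (\<Gamma> i)
                     @ map (\<lambda>a. (Tri i (imp0 a (Var (Pun i))), s)) (\<Gamma> i)) enum_class.enum)
     @ map (\<lambda>p. (Var p, s)) P"

definition tri :: "('agt \<Rightarrow> 'agt fm0 list) \<Rightarrow> nat \<Rightarrow> 'agt \<Rightarrow> 'agt fm0 \<Rightarrow> 'agt qvar qbf" where
  "tri \<Gamma> s i a = (if a \<in> set (\<Gamma> i) then QVar (Tri i a, s) else QBot)"

primrec tr0 :: "('agt \<Rightarrow> 'agt fm0 list) \<Rightarrow> nat \<Rightarrow> 'agt fm0 \<Rightarrow> 'agt qvar qbf" where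
  "tr0 \<Gamma> s (Var p) = QVar (Var p, s)"
| "tr0 \<Gamma> s (Neg a) = QNot (tr0 \<Gamma> s a)"
| "tr0 \<Gamma> s (Conj a b) = QAnd (tr0 \<Gamma> s a) (tr0 \<Gamma> s b)"
| "tr0 \<Gamma> s (Tri i a) = tri \<Gamma> s i a"

fun ant :: "'agt atm \<Rightarrow> 'agt fm0 \<Rightarrow> 'agt fm0 list" where
  "ant q (Neg (Conj a (Neg (Var r)))) = (if r = q then [a] else [])"
| "ant q _ = []"

lemma ant_imp0: "ant q b = [a] \<longleftrightarrow> b = imp0 a (Var q)"
  by (cases "(q,b)" rule: ant.cases) (auto simp: imp0_def)

definition Erel :: "('agt \<Rightarrow> 'agt fm0 list) \<Rightarrow> 'agt \<Rightarrow> nat \<Rightarrow> nat \<Rightarrow> 'agt qvar qbf" where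
  "Erel \<Gamma> i s s'' = qands (map (\<lambda>a. QImp (QVar (Tri i a, s)) (tr0 \<Gamma> s'' a)) (\<Gamma> i))"

definition Arel :: "('agt \<Rightarrow> 'agt fm0 list) \<Rightarrow> 'agt \<Rightarrow> nat \<Rightarrow> nat \<Rightarrow> 'agt qvar qbf" where
  "Arel \<Gamma> i s s'' = qors (map (\<lambda>a. QAnd (QVar (Tri i (imp0 a (Var (Rew i))), s)) (tr0 \<Gamma> s'' a))
                              (concat (map (ant (Rew i)) (\<Gamma> i))))"

definition Rrel :: "('agt \<Rightarrow> 'agt fm0 list) \<Rightarrow> 'agt \<Rightarrow> nat \<Rightarrow> nat \<Rightarrow> 'agt qvar qbf" where
  "Rrel \<Gamma> i s s'' = qors (map (\<lambda>a. QAnd (QVar (Tri i (imp0 a (Var (Pun i))), s)) (tr0 \<Gamma> s'' a))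
                              (concat (map (ant (Pun i)) (\<Gamma> i))))"

definition eq_prop :: "'agt atm list \<Rightarrow> nat \<Rightarrow> nat \<Rightarrow> 'agt qvar qbf" where
  "eq_prop P s s' = qands (map (\<lambda>p. QIff (QVar (Var p, s)) (QVar (Var p, s'))) P)"

definition eq_ag :: "('agt \<Rightarrow> 'agt fm0 list) \<Rightarrow> 'agt \<Rightarrow> nat \<Rightarrow> nat \<Rightarrow> 'agt qvar qbf" where
  "eq_ag \<Gamma> j s s' = qands (map (\<lambda>a. QIff (QVar (Tri j a, s)) (QVar (Tri j a, s'))) (\<Gamma> j))"

definition eq_others :: "('agt \<Rightarrow> 'agt fm0 list) \<Rightarrow> 'agt \<Rightarrow> 'agt fm0 \<Rightarrow> nat \<Rightarrow> nat \<Rightarrow> 'agt qvar qbf" where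
  "eq_others \<Gamma> i a s s' =
     qands (map (\<lambda>b. QIff (QVar (Tri i b, s)) (QVar (Tri i b, s'))) (filter (\<lambda>b. b \<noteq> a) (\<Gamma> i)))"

text \<open>eq^{+alpha}_i and eq^{-alpha}_i; the literal x_{tri_i alpha, s'} is written as
  tr_{s'}(tri_i alpha), which is that variable when alpha is in Gamma_i and bottom otherwise.\<close>
definition eq_plus :: "('agt \<Rightarrow> 'agt fm0 list) \<Rightarrow> 'agt \<Rightarrow> 'agt fm0 \<Rightarrow> nat \<Rightarrow> nat \<Rightarrow> 'agt qvar qbf" where
  "eq_plus \<Gamma> i a s s' = QAnd (tri \<Gamma> s' i a) (eq_others \<Gamma> i a s s')"

definition eq_minus :: "('agt \<Rightarrow> 'agt fm0 list) \<Rightarrow> 'agt \<Rightarrow> 'agt fm0 \<Rightarrow> nat \<Rightarrow> nat \<Rightarrow> 'agt qvar qbf" where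
  "eq_minus \<Gamma> i a s s' = QAnd (QNot (tri \<Gamma> s' i a)) (eq_others \<Gamma> i a s s')"

text \<open>tr and tr^prog.  The extra argument n is a supply of fresh symbols: every symbol
  in scope is < n, and n itself is used as the fresh symbol s''.\<close>
primrec tr :: "('agt::enum \<Rightarrow> 'agt fm0 list) \<Rightarrow> 'agt atm list \<Rightarrow> nat \<Rightarrow> nat \<Rightarrow> 'agt dyn \<Rightarrow> 'agt qvar qbf"
  and trp :: "('agt::enum \<Rightarrow> 'agt fm0 list) \<Rightarrow> 'agt atm list \<Rightarrow> nat \<Rightarrow> nat \<Rightarrow> nat \<Rightarrow> 'agt prog \<Rightarrow> 'agt qvar qbf" where
  "tr \<Gamma> P n s (DBase a) = tr0 \<Gamma> s a"
| "tr \<Gamma> P n s (DNeg \<phi>) = QNot (tr \<Gamma> P n s \<phi>)"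
| "tr \<Gamma> P n s (DAnd \<phi> \<psi>) = QAnd (tr \<Gamma> P n s \<phi>) (tr \<Gamma> P n s \<psi>)"
| "tr \<Gamma> P n s (DBox i \<phi>) = qall_block (Xs \<Gamma> P n) (QImp (Erel \<Gamma> i s n) (tr \<Gamma> P (Suc n) n \<phi>))"
| "tr \<Gamma> P n s (DA i \<phi>) = qall_block (Xs \<Gamma> P n) (QImp (tr \<Gamma> P (Suc n) n \<phi>) (Arel \<Gamma> i s n))"
| "tr \<Gamma> P n s (DR i \<phi>) = qall_block (Xs \<Gamma> P n) (QImp (tr \<Gamma> P (Suc n) n \<phi>) (Rrel \<Gamma> i s n))"
| "tr \<Gamma> P n s (DAreal i \<phi>) =
     qall_block (Xs \<Gamma> P n) (QImp (QAnd (tr \<Gamma> P (Suc n) n \<phi>) (Erel \<Gamma> i s n)) (Arel \<Gamma> i s n))"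
| "tr \<Gamma> P n s (DRreal i \<phi>) =
     qall_block (Xs \<Gamma> P n) (QImp (QAnd (tr \<Gamma> P (Suc n) n \<phi>) (Erel \<Gamma> i s n)) (Rrel \<Gamma> i s n))"
| "tr \<Gamma> P n s (DProg \<pi> \<phi>) =
     qall_block (Xs \<Gamma> P n) (QImp (trp \<Gamma> P (Suc n) s n \<pi>) (tr \<Gamma> P (Suc n) n \<phi>))"
| "trp \<Gamma> P n s s' (PAdd i a) =
     QAnd (qands (map (\<lambda>j. eq_ag \<Gamma> j s s') (filter (\<lambda>j. j \<noteq> i) enum_class.enum)))
          (QAnd (eq_plus \<Gamma> i a s s') (eq_prop P s s'))"
| "trp \<Gamma> P n s s' (PRem i a) =
     QAnd (qands (map (\<lambda>j. eq_ag \<Gamma> j s s') (filter (\<lambda>j. j \<noteq> i) enum_class.enum)))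
          (QAnd (eq_minus \<Gamma> i a s s') (eq_prop P s s'))"
| "trp \<Gamma> P n s s' (PSeq p q) =
     qex_block (Xs \<Gamma> P n) (QAnd (trp \<Gamma> P (Suc n) s n p) (trp \<Gamma> P (Suc n) n s' q))"
| "trp \<Gamma> P n s s' (PChoice p q) = QOr (trp \<Gamma> P n s s' p) (trp \<Gamma> P n s s' q)"
| "trp \<Gamma> P n s s' (PTest \<phi>) =
     QAnd (qands (map (\<lambda>j. eq_ag \<Gamma> j s s') enum_class.enum))
          (QAnd (eq_prop P s s') (tr \<Gamma> P n s \<phi>))"

definition desc :: "('agt::enum \<Rightarrow> 'agt fm0 list) \<Rightarrow> 'agt atm list \<Rightarrow> 'agt state \<Rightarrow> nat \<Rightarrow> 'agt qvar qbf" where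
  "desc \<Gamma> P S s = qands
     (concat (map (\<lambda>i. map (\<lambda>a. if a \<in> fst S i then QVar (Tri i a, s) else QNot (QVar (Tri i a, s)))
                            (\<Gamma> i)) enum_class.enum)
      @ map (\<lambda>p. if p \<in> snd S then QVar (Var p, s) else QNot (QVar (Var p, s))) P)"

definition main_qbf :: "('agt::enum \<Rightarrow> 'agt fm0 list) \<Rightarrow> 'agt dyn \<Rightarrow> 'agt state \<Rightarrow> 'agt qvar qbf" where
  "main_qbf \<Gamma> \<phi>0 S0 =
     (let P = Patoms \<Gamma> \<phi>0 in qex_block (Xs \<Gamma> P 0) (QAnd (desc \<Gamma> P S0 0) (tr \<Gamma> P 1 0 \<phi>0)))"

end

theory Submission
  imports Defs
begin

text \<open>An assignment to the block \<open>X\<^sub>s\<close> encodes a state of \<open>S\<^sub>\<Gamma>\<close>, except that it only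
  records the atoms \<open>P\<close> occurring in \<open>\<Gamma>\<close> or \<open>\<phi>\<^sub>0\<close>; conversely every state is
  encoded by some assignment. Hence the block quantifiers of the translation range exactly over
  \<open>S\<^sub>\<Gamma>\<close>, and \<open>E\<close>, \<open>A\<close>, \<open>R\<close> and the equality macros evaluate to the
  corresponding relations between encoded states. Satisfaction of formulas over \<open>P\<close> does not
  depend on the atoms outside \<open>P\<close>, so a simultaneous induction on formulas and programs,
  matching program steps only up to agreement on \<open>P\<close>, shows that \<open>tr\<^sub>s(\<phi>)\<close> holds
  under an encoding of \<open>S\<close> iff \<open>S\<close> satisfies \<open>\<phi>\<close>. Finally
  \<open>desc\<^sub>S\<^sub>0(X\<^sub>s)\<close> forces \<open>X\<^sub>s\<close> to encode \<open>S\<^sub>0\<close>.\<close>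

lemma qeval_qands [simp]: "qeval v (qands fs) = (\<forall>f\<in>set fs. qeval v f)"
  unfolding qands_def by (induction fs) auto

lemma qeval_qors [simp]: "qeval v (qors fs) = (\<exists>f\<in>set fs. qeval v f)"
  unfolding qors_def by (induction fs) auto

lemma qeval_qex_block:
  "qeval v (qex_block xs f) \<longleftrightarrow> (\<exists>w. (\<forall>x. x \<notin> set xs \<longrightarrow> w x = v x) \<and> qeval w f)"
proof (induction xs arbitrary: v)
  case Nil
  show ?case
    by (auto simp: qex_block_def)
next
  case (Cons x xs)
  have "qeval v (qex_block (x # xs) f) \<longleftrightarrow>
      (\<exists>b w. (\<forall>y. y \<notin> set xs \<longrightarrow> w y = (v(x := b)) y) \<and> qeval w f)"
    by (simp add: qex_block_def Cons[unfolded qex_block_def])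
  also have "\<dots> \<longleftrightarrow> (\<exists>w. (\<forall>y. y \<notin> set (x # xs) \<longrightarrow> w y = v y) \<and> qeval w f)"
  proof
    assume "\<exists>b w. (\<forall>y. y \<notin> set xs \<longrightarrow> w y = (v(x := b)) y) \<and> qeval w f"
    then obtain b w where "\<forall>y. y \<notin> set xs \<longrightarrow> w y = (v(x := b)) y" "qeval w f"
      by blast
    then show "\<exists>w. (\<forall>y. y \<notin> set (x # xs) \<longrightarrow> w y = v y) \<and> qeval w f"
      by (intro exI[of _ w]) simp
  next
    assume "\<exists>w. (\<forall>y. y \<notin> set (x # xs) \<longrightarrow> w y = v y) \<and> qeval w f"
    then show "\<exists>b w. (\<forall>y. y \<notin> set xs \<longrightarrow> w y = (v(x := b)) y) \<and> qeval w f"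
      by (metis fun_upd_other fun_upd_same set_ConsD)
  qed
  finally show ?case .
qed

lemma qeval_qall_block_eq_not_qex:
  "qeval v (qall_block xs f) \<longleftrightarrow> \<not> qeval v (qex_block xs (QNot f))"
  unfolding qall_block_def qex_block_def by (induction xs arbitrary: v) auto

lemma qeval_literal: "qeval w (if b then QVar x else QNot (QVar x)) \<longleftrightarrow> (w x \<longleftrightarrow> b)"
  by simp

definition agree_on :: "'agt atm list \<Rightarrow> 'agt state \<Rightarrow> 'agt state \<Rightarrow> bool" where
  "agree_on P S T \<longleftrightarrow> fst S = fst T \<and> snd S \<inter> set P = snd T \<inter> set P"

lemma agree_on_refl [simp]: "agree_on P S S"
  by (simp add: agree_on_def)

lemma agree_on_sym: "agree_on P S T \<Longrightarrow> agree_on P T S"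
  by (simp add: agree_on_def)

lemma agree_on_trans: "agree_on P S T \<Longrightarrow> agree_on P T R \<Longrightarrow> agree_on P S R"
  by (simp add: agree_on_def)

lemma states_Gamma_agree_on: "agree_on P S T \<Longrightarrow> S \<in> states_Gamma \<Gamma> \<longleftrightarrow> T \<in> states_Gamma \<Gamma>"
  by (simp add: agree_on_def states_Gamma_def)

lemma sat0_agree_on: "agree_on P S T \<Longrightarrow> set (atoms0 a) \<subseteq> set P \<Longrightarrow> sat0 S a = sat0 T a"
  by (induction a) (auto simp: agree_on_def)

lemma rel_agree_on:
  assumes "agree_on P S T"
  shows "relE i S = relE i T" "relA i S = relA i T" "relR i S = relR i T"
  using assms by (auto simp: agree_on_def relE_def relA_def relR_def fun_eq_iff)

lemma sat_step_agree_on: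
  "set (atoms_dyn \<phi>) \<subseteq> set P \<Longrightarrow> agree_on P S T \<Longrightarrow>
     sat (states_Gamma \<Gamma>) S \<phi> = sat (states_Gamma \<Gamma>) T \<phi>"
  "set (atoms_prog \<pi>) \<subseteq> set P \<Longrightarrow> agree_on P S T \<Longrightarrow> step (states_Gamma \<Gamma>) \<pi> S S' \<Longrightarrow>
     \<exists>T'. step (states_Gamma \<Gamma>) \<pi> T T' \<and> agree_on P S' T'"
proof (induction \<phi> and \<pi> arbitrary: S T and S T S')
  case (DBase a)
  then show ?case by (simp add: sat0_agree_on)
next
  case (DProg \<pi> \<phi>)
  let ?U = "states_Gamma \<Gamma>"
  have atoms: "set (atoms_prog \<pi>) \<subseteq> set P" "set (atoms_dyn \<phi>) \<subseteq> set P"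
    using DProg.prems(1) by auto
  have box_transfer: "sat ?U Y (DProg \<pi> \<phi>)" if "agree_on P X Y" "sat ?U X (DProg \<pi> \<phi>)" for X Y
  proof (unfold sat.simps, intro ballI impI)
    fix Y' assume "Y' \<in> ?U" "step ?U \<pi> Y Y'"
    then obtain X' where X': "step ?U \<pi> X X'" "agree_on P Y' X'"
      using DProg.IH(1)[OF atoms(1) agree_on_sym[OF \<open>agree_on P X Y\<close>]] by blast
    moreover have "X' \<in> ?U"
      using states_Gamma_agree_on[OF X'(2)] \<open>Y' \<in> ?U\<close> by blast
    ultimately show "sat ?U Y' \<phi>"
      using that(2) DProg.IH(2)[OF atoms(2) X'(2)] by auto
  qed
  then show ?case
    using DProg.prems(2) agree_on_sym by blast
next
  case (PAdd i a)
  then show ?case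
    by (intro exI[of _ "((fst T)(i := insert a (fst T i)), snd T)"]) (auto simp: agree_on_def)
next
  case (PRem i a)
  then show ?case
    by (intro exI[of _ "((fst T)(i := fst T i - {a}), snd T)"]) (auto simp: agree_on_def)
next
  case (PSeq p q)
  let ?U = "states_Gamma \<Gamma>"
  have atoms: "set (atoms_prog p) \<subseteq> set P" "set (atoms_prog q) \<subseteq> set P"
    using PSeq.prems(1) by auto
  obtain M where M: "M \<in> ?U" "step ?U p S M" "step ?U q M S'"
    using PSeq.prems(3) by auto
  obtain M' where M': "step ?U p T M'" "agree_on P M M'"
    using PSeq.IH(1)[OF atoms(1) PSeq.prems(2) M(2)] by blast
  obtain T' where "step ?U q M' T'" "agree_on P S' T'"
    using PSeq.IH(2)[OF atoms(2) M'(2) M(3)] by blast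
  moreover have "M' \<in> ?U"
    using states_Gamma_agree_on[OF M'(2)] M(1) by blast
  ultimately show ?case
    using M'(1) by (intro exI[of _ T']) auto
next
  case (PChoice p q)
  then show ?case
    by (simp only: step.simps atoms_prog.simps set_append Un_subset_iff) blast
next
  case (PTest \<phi>)
  then show ?case by auto
qed (simp_all add: rel_agree_on)

text \<open>The QBF variables record only the atoms in \<open>P\<close>, so the translation of a program can
  determine its target state only up to agreement on \<open>P\<close>.\<close>

definition step_mod ::
    "('agt \<Rightarrow> 'agt fm0 list) \<Rightarrow> 'agt atm list \<Rightarrow> 'agt prog \<Rightarrow> 'agt state \<Rightarrow> 'agt state \<Rightarrow> bool"
  where
  "step_mod \<Gamma> P \<pi> S S' \<longleftrightarrow> (\<exists>T. step (states_Gamma \<Gamma>) \<pi> S T \<and> agree_on P T S')"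

lemma step_mod_PAdd:
  "step_mod \<Gamma> P (PAdd i a) S S' \<longleftrightarrow> agree_on P ((fst S)(i := insert a (fst S i)), snd S) S'"
  by (auto simp: step_mod_def)

lemma step_mod_PRem:
  "step_mod \<Gamma> P (PRem i a) S S' \<longleftrightarrow> agree_on P ((fst S)(i := fst S i - {a}), snd S) S'"
  by (auto simp: step_mod_def)

lemma step_mod_PChoice:
  "step_mod \<Gamma> P (PChoice p q) S S' \<longleftrightarrow> step_mod \<Gamma> P p S S' \<or> step_mod \<Gamma> P q S S'"
  by (auto simp: step_mod_def)

lemma step_mod_PTest:
  "step_mod \<Gamma> P (PTest \<phi>) S S' \<longleftrightarrow> agree_on P S S' \<and> sat (states_Gamma \<Gamma>) S \<phi>"
  by (auto simp: step_mod_def)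

lemma step_mod_PSeq:
  assumes "set (atoms_prog q) \<subseteq> set P"
  shows "step_mod \<Gamma> P (PSeq p q) S S' \<longleftrightarrow>
    (\<exists>M\<in>states_Gamma \<Gamma>. step_mod \<Gamma> P p S M \<and> step_mod \<Gamma> P q M S')"
proof
  assume "step_mod \<Gamma> P (PSeq p q) S S'"
  then obtain M T where "M \<in> states_Gamma \<Gamma>" "step (states_Gamma \<Gamma>) p S M"
    "step (states_Gamma \<Gamma>) q M T" "agree_on P T S'"
    unfolding step_mod_def by auto
  then show "\<exists>M\<in>states_Gamma \<Gamma>. step_mod \<Gamma> P p S M \<and> step_mod \<Gamma> P q M S'"
    unfolding step_mod_def using agree_on_refl by blast
next
  let ?U = "states_Gamma \<Gamma>"
  assume "\<exists>M\<in>?U. step_mod \<Gamma> P p S M \<and> step_mod \<Gamma> P q M S'"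
  then obtain M T1 T2 where M: "M \<in> ?U" "step ?U p S T1" "agree_on P T1 M"
    "step ?U q M T2" "agree_on P T2 S'"
    by (auto simp: step_mod_def)
  obtain T2' where T2': "step ?U q T1 T2'" "agree_on P T2 T2'"
    using sat_step_agree_on(2)[OF assms agree_on_sym[OF M(3)] M(4)] by blast
  have "T1 \<in> ?U"
    using M(1,3) states_Gamma_agree_on by blast
  moreover have "agree_on P T2' S'"
    using T2'(2) M(5) agree_on_sym agree_on_trans by blast
  ultimately show "step_mod \<Gamma> P (PSeq p q) S S'"
    unfolding step_mod_def step.simps using M(2) T2'(1) by blast
qed

lemma sat_DProg_step_mod:
  assumes "set (atoms_dyn \<phi>) \<subseteq> set P"
  shows "sat (states_Gamma \<Gamma>) S (DProg \<pi> \<phi>) \<longleftrightarrow>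
    (\<forall>M\<in>states_Gamma \<Gamma>. step_mod \<Gamma> P \<pi> S M \<longrightarrow> sat (states_Gamma \<Gamma>) M \<phi>)"
    (is "?box \<longleftrightarrow> _")
proof (intro iffI ballI impI)
  fix M assume ?box "M \<in> states_Gamma \<Gamma>" "step_mod \<Gamma> P \<pi> S M"
  then obtain T where T: "T \<in> states_Gamma \<Gamma>" "sat (states_Gamma \<Gamma>) T \<phi>" "agree_on P T M"
    unfolding step_mod_def sat.simps using states_Gamma_agree_on by blast
  then show "sat (states_Gamma \<Gamma>) M \<phi>"
    using sat_step_agree_on(1)[OF assms T(3)] by blast
next
  assume "\<forall>M\<in>states_Gamma \<Gamma>. step_mod \<Gamma> P \<pi> S M \<longrightarrow> sat (states_Gamma \<Gamma>) M \<phi>"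
  then show ?box
    unfolding step_mod_def sat.simps using agree_on_refl by blast
qed

lemma set_concat_ant: "set (concat (map (ant q) bs)) = {a. imp0 a (Var q) \<in> set bs}"
proof -
  have "a \<in> set (ant q b) \<longleftrightarrow> b = imp0 a (Var q)" for a b
    by (cases "(q, b)" rule: ant.cases) (auto simp: imp0_def)
  then show ?thesis
    by auto
qed

locale translation =
  fixes \<Gamma> :: "'agt::enum \<Rightarrow> 'agt fm0 list" and P :: "'agt atm list"
  assumes atoms_Gamma_subset: "a \<in> set (\<Gamma> i) \<Longrightarrow> set (atoms0 a) \<subseteq> set P"
begin

definition encodes :: "('agt qvar \<Rightarrow> bool) \<Rightarrow> nat \<Rightarrow> 'agt state \<Rightarrow> bool" where
  "encodes v s S \<longleftrightarrow> (\<forall>i. \<forall>a\<in>set (\<Gamma> i). v (Tri i a, s) = (a \<in> fst S i))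
                    \<and> (\<forall>p\<in>set P. v (Var p, s) = (p \<in> snd S))"

definition decode :: "('agt qvar \<Rightarrow> bool) \<Rightarrow> nat \<Rightarrow> 'agt state" where
  "decode v s = (\<lambda>i. {a \<in> set (\<Gamma> i). v (Tri i a, s)}, {p \<in> set P. v (Var p, s)})"

lemma encodes_decode: "encodes v s (decode v s)"
  by (simp add: encodes_def decode_def)

lemma decode_in_states_Gamma: "decode v s \<in> states_Gamma \<Gamma>"
  by (auto simp: decode_def states_Gamma_def)

lemma snd_in_Xs: "x \<in> set (Xs \<Gamma> P n) \<Longrightarrow> snd x = n"
  by (auto simp: Xs_def)

lemma Tri_in_Xs: "a \<in> set (\<Gamma> i) \<Longrightarrow> (Tri i a, n) \<in> set (Xs \<Gamma> P n)"
  by (auto simp: Xs_def in_enum)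

lemma Var_in_Xs: "p \<in> set P \<Longrightarrow> (Var p, n) \<in> set (Xs \<Gamma> P n)"
  by (auto simp: Xs_def)

lemma encodes_other_slice:
  assumes "\<forall>x. x \<notin> set (Xs \<Gamma> P n) \<longrightarrow> w x = v x" "t \<noteq> n"
  shows "encodes w t T \<longleftrightarrow> encodes v t T"
proof -
  have "w (y, t) = v (y, t)" for y
    using assms snd_in_Xs[of "(y, t)"] by auto
  then show ?thesis
    by (simp add: encodes_def)
qed

lemma encodes_override:
  "\<exists>w. (\<forall>x. x \<notin> set (Xs \<Gamma> P n) \<longrightarrow> w x = v x) \<and> encodes w n S"
proof -
  define w where "w x = (if x \<in> set (Xs \<Gamma> P n) then
      (case fst x of Var p \<Rightarrow> p \<in> snd S | Tri i a \<Rightarrow> a \<in> fst S i | _ \<Rightarrow> False) else v x)" for x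
  have "encodes w n S"
    unfolding encodes_def w_def by (simp add: Tri_in_Xs Var_in_Xs)
  then show ?thesis
    by (intro exI[of _ w]) (simp add: w_def)
qed

lemma qeval_qex_Xs:
  assumes "\<And>w M. M \<in> states_Gamma \<Gamma> \<Longrightarrow> encodes w n M \<Longrightarrow>
    (\<And>t T. t \<noteq> n \<Longrightarrow> encodes v t T \<Longrightarrow> encodes w t T) \<Longrightarrow> qeval w F \<longleftrightarrow> G M"
  shows "qeval v (qex_block (Xs \<Gamma> P n) F) \<longleftrightarrow> (\<exists>M\<in>states_Gamma \<Gamma>. G M)"
  unfolding qeval_qex_block
proof
  assume "\<exists>w. (\<forall>x. x \<notin> set (Xs \<Gamma> P n) \<longrightarrow> w x = v x) \<and> qeval w F"
  then obtain w where w: "\<forall>x. x \<notin> set (Xs \<Gamma> P n) \<longrightarrow> w x = v x" "qeval w F"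
    by blast
  then have "G (decode w n)"
    using assms[OF decode_in_states_Gamma encodes_decode] encodes_other_slice[OF w(1)] by blast
  then show "\<exists>M\<in>states_Gamma \<Gamma>. G M"
    using decode_in_states_Gamma by blast
next
  assume "\<exists>M\<in>states_Gamma \<Gamma>. G M"
  then obtain M where M: "M \<in> states_Gamma \<Gamma>" "G M"
    by blast
  obtain w where w: "\<forall>x. x \<notin> set (Xs \<Gamma> P n) \<longrightarrow> w x = v x" "encodes w n M"
    using encodes_override by blast
  then have "qeval w F"
    using assms[OF M(1) w(2)] M(2) encodes_other_slice[OF w(1)] by blast
  then show "\<exists>w. (\<forall>x. x \<notin> set (Xs \<Gamma> P n) \<longrightarrow> w x = v x) \<and> qeval w F"
    using w(1) by blast
qed

lemma qeval_qall_Xs: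
  assumes "\<And>w M. M \<in> states_Gamma \<Gamma> \<Longrightarrow> encodes w n M \<Longrightarrow>
    (\<And>t T. t \<noteq> n \<Longrightarrow> encodes v t T \<Longrightarrow> encodes w t T) \<Longrightarrow> qeval w F \<longleftrightarrow> G M"
  shows "qeval v (qall_block (Xs \<Gamma> P n) F) \<longleftrightarrow> (\<forall>M\<in>states_Gamma \<Gamma>. G M)"
proof -
  have "qeval v (qex_block (Xs \<Gamma> P n) (QNot F)) \<longleftrightarrow> (\<exists>M\<in>states_Gamma \<Gamma>. \<not> G M)"
    by (rule qeval_qex_Xs) (simp add: assms)
  then show ?thesis
    by (simp add: qeval_qall_block_eq_not_qex)
qed

lemma qeval_tri:
  assumes "S \<in> states_Gamma \<Gamma>" "encodes v s S"
  shows "qeval v (tri \<Gamma> s i a) \<longleftrightarrow> a \<in> fst S i"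
  using assms by (auto simp: tri_def encodes_def states_Gamma_def)

lemma qeval_tr0:
  assumes "S \<in> states_Gamma \<Gamma>" "encodes v s S" "set (atoms0 a) \<subseteq> set P"
  shows "qeval v (tr0 \<Gamma> s a) \<longleftrightarrow> sat0 S a"
  using assms(3) by (induction a) (use assms in \<open>auto simp: qeval_tri encodes_def\<close>)

lemma qeval_Erel:
  assumes "S \<in> states_Gamma \<Gamma>" "M \<in> states_Gamma \<Gamma>" "encodes v s S" "encodes v t M"
  shows "qeval v (Erel \<Gamma> i s t) \<longleftrightarrow> relE i S M"
proof -
  have "fst S i \<subseteq> set (\<Gamma> i)"
    using assms(1) by (auto simp: states_Gamma_def)
  then show ?thesis
    using assms(3) qeval_tr0[OF assms(2,4) atoms_Gamma_subset]
    by (auto simp: Erel_def relE_def encodes_def)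
qed

lemma qeval_antecedent_disj:
  assumes "S \<in> states_Gamma \<Gamma>" "M \<in> states_Gamma \<Gamma>" "encodes v s S" "encodes v t M"
  shows "qeval v (qors (map (\<lambda>a. QAnd (QVar (Tri i (imp0 a (Var q)), s)) (tr0 \<Gamma> t a))
                            (concat (map (ant q) (\<Gamma> i)))))
    \<longleftrightarrow> (\<exists>a. imp0 a (Var q) \<in> fst S i \<and> sat0 M a)"
proof -
  have "fst S i \<subseteq> set (\<Gamma> i)"
    using assms(1) by (auto simp: states_Gamma_def)
  moreover have "set (atoms0 a) \<subseteq> set P" if "imp0 a (Var q) \<in> set (\<Gamma> i)" for a
    using atoms_Gamma_subset[OF that] by (auto simp: imp0_def)
  ultimately show ?thesis
    unfolding qeval_qors set_map set_concat_ant
    using assms(3) qeval_tr0[OF assms(2,4)] by (auto simp: encodes_def)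
qed

lemma qeval_Arel:
  assumes "S \<in> states_Gamma \<Gamma>" "M \<in> states_Gamma \<Gamma>" "encodes v s S" "encodes v t M"
  shows "qeval v (Arel \<Gamma> i s t) \<longleftrightarrow> relA i S M"
  unfolding Arel_def relA_def using assms by (rule qeval_antecedent_disj)

lemma qeval_Rrel:
  assumes "S \<in> states_Gamma \<Gamma>" "M \<in> states_Gamma \<Gamma>" "encodes v s S" "encodes v t M"
  shows "qeval v (Rrel \<Gamma> i s t) \<longleftrightarrow> relR i S M"
  unfolding Rrel_def relR_def using assms by (rule qeval_antecedent_disj)

lemma qeval_eq_ag:
  assumes "S \<in> states_Gamma \<Gamma>" "S' \<in> states_Gamma \<Gamma>" "encodes v s S" "encodes v s' S'"
  shows "qeval v (eq_ag \<Gamma> j s s') \<longleftrightarrow> fst S j = fst S' j"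
proof -
  have "fst S j \<subseteq> set (\<Gamma> j)" "fst S' j \<subseteq> set (\<Gamma> j)"
    using assms(1,2) by (auto simp: states_Gamma_def)
  then show ?thesis
    using assms(3,4) unfolding eq_ag_def encodes_def by auto
qed

lemma qeval_eq_prop:
  assumes "encodes v s S" "encodes v s' S'"
  shows "qeval v (eq_prop P s s') \<longleftrightarrow> snd S \<inter> set P = snd S' \<inter> set P"
  using assms unfolding eq_prop_def encodes_def by auto

lemma qeval_eq_others:
  assumes "encodes v s S" "encodes v s' S'"
  shows "qeval v (eq_others \<Gamma> i a s s') \<longleftrightarrow>
    (\<forall>b\<in>set (\<Gamma> i) - {a}. b \<in> fst S i \<longleftrightarrow> b \<in> fst S' i)"
  using assms unfolding eq_others_def encodes_def by auto

lemma qeval_eq_plus: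
  assumes "S \<in> states_Gamma \<Gamma>" "S' \<in> states_Gamma \<Gamma>" "encodes v s S" "encodes v s' S'"
  shows "qeval v (eq_plus \<Gamma> i a s s') \<longleftrightarrow> fst S' i = insert a (fst S i)"
proof -
  have "fst S i \<subseteq> set (\<Gamma> i)" "fst S' i \<subseteq> set (\<Gamma> i)"
    using assms(1,2) by (auto simp: states_Gamma_def)
  then show ?thesis
    unfolding eq_plus_def using qeval_tri[OF assms(2,4)] qeval_eq_others[OF assms(3,4)] by auto
qed

lemma qeval_eq_minus:
  assumes "S \<in> states_Gamma \<Gamma>" "S' \<in> states_Gamma \<Gamma>" "encodes v s S" "encodes v s' S'"
  shows "qeval v (eq_minus \<Gamma> i a s s') \<longleftrightarrow> fst S' i = fst S i - {a}"
proof -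
  have "fst S i \<subseteq> set (\<Gamma> i)" "fst S' i \<subseteq> set (\<Gamma> i)"
    using assms(1,2) by (auto simp: states_Gamma_def)
  then show ?thesis
    unfolding eq_minus_def using qeval_tri[OF assms(2,4)] qeval_eq_others[OF assms(3,4)] by auto
qed

lemma qeval_trp_PAdd:
  assumes "S \<in> states_Gamma \<Gamma>" "S' \<in> states_Gamma \<Gamma>" "encodes v s S" "encodes v s' S'"
  shows "qeval v (trp \<Gamma> P n s s' (PAdd i a)) \<longleftrightarrow> step_mod \<Gamma> P (PAdd i a) S S'"
  using qeval_eq_ag[OF assms] qeval_eq_plus[OF assms] qeval_eq_prop[OF assms(3,4)]
  by (auto simp: step_mod_PAdd agree_on_def fun_eq_iff in_enum)

lemma qeval_trp_PRem:
  assumes "S \<in> states_Gamma \<Gamma>" "S' \<in> states_Gamma \<Gamma>" "encodes v s S" "encodes v s' S'"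
  shows "qeval v (trp \<Gamma> P n s s' (PRem i a)) \<longleftrightarrow> step_mod \<Gamma> P (PRem i a) S S'"
  using qeval_eq_ag[OF assms] qeval_eq_minus[OF assms] qeval_eq_prop[OF assms(3,4)]
  by (auto simp: step_mod_PRem agree_on_def fun_eq_iff in_enum)

text \<open>The fresh-symbol supply \<open>n\<close> exceeds every symbol in scope, so quantifying the block
  \<open>X\<^sub>n\<close> never overwrites the encodings of \<open>S\<close> and \<open>S'\<close>.\<close>

lemma qeval_tr_trp:
  "set (atoms_dyn \<phi>) \<subseteq> set P \<Longrightarrow> s < n \<Longrightarrow> S \<in> states_Gamma \<Gamma> \<Longrightarrow> encodes v s S \<Longrightarrow>
     qeval v (tr \<Gamma> P n s \<phi>) \<longleftrightarrow> sat (states_Gamma \<Gamma>) S \<phi>"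
  "set (atoms_prog \<pi>) \<subseteq> set P \<Longrightarrow> s < n \<Longrightarrow> s' < n \<Longrightarrow>
     S \<in> states_Gamma \<Gamma> \<Longrightarrow> S' \<in> states_Gamma \<Gamma> \<Longrightarrow> encodes v s S \<Longrightarrow> encodes v s' S' \<Longrightarrow>
     qeval v (trp \<Gamma> P n s s' \<pi>) \<longleftrightarrow> step_mod \<Gamma> P \<pi> S S'"
proof (induction \<phi> and \<pi> arbitrary: n s S v and n s s' S S' v)
  case (DBase a)
  then show ?case by (simp add: qeval_tr0)
next
  case (DBox i \<phi>)
  show ?case unfolding tr.simps sat.simps
  proof (rule qeval_qall_Xs, goal_cases)
    case (1 w M)
    with DBox show ?case
      by (simp add: qeval_Erel DBox.IH[where n = "Suc n" and s = n and S = M and v = w])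
  qed
next
  case (DA i \<phi>)
  show ?case unfolding tr.simps sat.simps
  proof (rule qeval_qall_Xs, goal_cases)
    case (1 w M)
    with DA show ?case
      by (simp add: qeval_Arel DA.IH[where n = "Suc n" and s = n and S = M and v = w])
  qed
next
  case (DR i \<phi>)
  show ?case unfolding tr.simps sat.simps
  proof (rule qeval_qall_Xs, goal_cases)
    case (1 w M)
    with DR show ?case
      by (simp add: qeval_Rrel DR.IH[where n = "Suc n" and s = n and S = M and v = w])
  qed
next
  case (DAreal i \<phi>)
  show ?case unfolding tr.simps sat.simps
  proof (rule qeval_qall_Xs, goal_cases)
    case (1 w M)
    with DAreal show ?case
      by (simp add: qeval_Erel qeval_Arel
          DAreal.IH[where n = "Suc n" and s = n and S = M and v = w])
  qed
next
  case (DRreal i \<phi>)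
  show ?case unfolding tr.simps sat.simps
  proof (rule qeval_qall_Xs, goal_cases)
    case (1 w M)
    with DRreal show ?case
      by (simp add: qeval_Erel qeval_Rrel
          DRreal.IH[where n = "Suc n" and s = n and S = M and v = w])
  qed
next
  case (DProg \<pi> \<phi>)
  then have atoms: "set (atoms_prog \<pi>) \<subseteq> set P" "set (atoms_dyn \<phi>) \<subseteq> set P"
    by auto
  show ?case unfolding tr.simps sat_DProg_step_mod[OF atoms(2)]
  proof (rule qeval_qall_Xs, goal_cases)
    case (1 w M)
    with DProg atoms show ?case
      by (simp add: DProg.IH(1)[where n = "Suc n" and s' = n and S' = M and v = w]
        DProg.IH(2)[where n = "Suc n" and s = n and S = M and v = w])
  qed
next
  case (PSeq p q)
  then have atoms: "set (atoms_prog p) \<subseteq> set P" "set (atoms_prog q) \<subseteq> set P"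
    by auto
  show ?case unfolding trp.simps step_mod_PSeq[OF atoms(2)]
  proof (rule qeval_qex_Xs, goal_cases)
    case (1 w M)
    with PSeq atoms show ?case
      by (simp add: PSeq.IH(1)[where n = "Suc n" and s' = n and S' = M and v = w]
        PSeq.IH(2)[where n = "Suc n" and s = n and S = M and v = w])
  qed
next
  case (PChoice p q)
  then show ?case by (simp add: step_mod_PChoice)
next
  case (PTest \<phi>)
  then show ?case
    by (simp add: qeval_eq_ag qeval_eq_prop step_mod_PTest agree_on_def fun_eq_iff enum_UNIV)
next
  case (PAdd i a)
  then show ?case by (simp only: qeval_trp_PAdd)
next
  case (PRem i a)
  then show ?case by (simp only: qeval_trp_PRem)
qed simp_all

lemma qeval_desc: "qeval w (desc \<Gamma> P S s) \<longleftrightarrow> encodes w s S"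
  unfolding desc_def encodes_def qeval_qands set_append ball_Un set_concat set_map
    ball_UN Ball_image_comp comp_def qeval_literal
  by (simp add: enum_UNIV)

end

theorem proposition3:
  fixes \<Gamma> :: "'agt::enum \<Rightarrow> 'agt fm0 list" and \<phi>0 :: "'agt dyn" and S0 :: "'agt state"
  assumes "S0 \<in> states_Gamma \<Gamma>"
  shows "sat (states_Gamma \<Gamma>) S0 \<phi>0 \<longleftrightarrow> qbf_true (main_qbf \<Gamma> \<phi>0 S0)"
proof -
  define P where "P = Patoms \<Gamma> \<phi>0"
  interpret translation \<Gamma> P
    by unfold_locales (auto simp: P_def Patoms_def enum_UNIV)
  have atoms: "set (atoms_dyn \<phi>0) \<subseteq> set P"
    by (auto simp: P_def Patoms_def)
  have "qeval v (main_qbf \<Gamma> \<phi>0 S0) \<longleftrightarrow> sat (states_Gamma \<Gamma>) S0 \<phi>0" for v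
  proof -
    have "qeval v (main_qbf \<Gamma> \<phi>0 S0) \<longleftrightarrow> (\<exists>w. (\<forall>x. x \<notin> set (Xs \<Gamma> P 0) \<longrightarrow> w x = v x) \<and>
        encodes w 0 S0 \<and> qeval w (tr \<Gamma> P 1 0 \<phi>0))"
      by (simp add: main_qbf_def P_def[symmetric] qeval_qex_block qeval_desc)
    also have "\<dots> \<longleftrightarrow> (\<exists>w. (\<forall>x. x \<notin> set (Xs \<Gamma> P 0) \<longrightarrow> w x = v x) \<and>
        encodes w 0 S0 \<and> sat (states_Gamma \<Gamma>) S0 \<phi>0)"
      using qeval_tr_trp(1)[OF atoms _ assms] by auto
    also have "\<dots> \<longleftrightarrow> sat (states_Gamma \<Gamma>) S0 \<phi>0"
      using encodes_override by blast
    finally show ?thesis .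
  qed
  then show ?thesis
    by (simp add: qbf_true_def)
qed

end
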